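(* Let $a:\mathbb{Z}\curvearrowright X$ be a free Borel action of $\mathbb{Z}$ on a standard Borel space $X$, and let $S=\{1,-1\}$. Suppose $V\subseteq X$ is a Borel set such that every injective $G(a,S)$-ray contains infinitely many edges with both endpoints in $V$. Then there is a Borel edge coloring of $G(a,S)$ with colors $\{1,2,3\}$ such that the color $3$ is used only on edges with both endpoints in $V$.
   Context: $G(a,S)$ is the graph on $X$ with $x,y$ adjacent iff $y=x+1$ or $y=x-1$ under the action. An injective $G$-ray is an injective sequence $x_0,x_1,\dots$ with each $(x_i,x_{i+1})$ an edge. An edge coloring gives distinct colors to edges sharing a vertex. *)

theory Defs
  imports "HOL-Analysis.Analysis"
begin

text \<open>A standard Borel space is modelled (up to Borel isomorphism) as a Polish space
  type with its Borel sigma-algebra.\<close>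

definition borel_Z_action :: "(int \<Rightarrow> 'a::topological_space \<Rightarrow> 'a) \<Rightarrow> bool" where
  "borel_Z_action a \<longleftrightarrow> a 0 = id \<and> (\<forall>m n. a (m + n) = a m \<circ> a n)
     \<and> (\<forall>n. a n \<in> borel_measurable borel)"

definition free_action :: "(int \<Rightarrow> 'a \<Rightarrow> 'a) \<Rightarrow> bool" where
  "free_action a \<longleftrightarrow> (\<forall>n x. a n x = x \<longrightarrow> n = 0)"

definition G_adj :: "(int \<Rightarrow> 'a \<Rightarrow> 'a) \<Rightarrow> 'a \<Rightarrow> 'a \<Rightarrow> bool" where
  "G_adj a x y \<longleftrightarrow> y = a 1 x \<or> y = a (-1) x"

definition injective_ray :: "(int \<Rightarrow> 'a \<Rightarrow> 'a) \<Rightarrow> (nat \<Rightarrow> 'a) \<Rightarrow> bool" where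
  "injective_ray a r \<longleftrightarrow> inj r \<and> (\<forall>i. G_adj a (r i) (r (Suc i)))"

definition edge_coloring :: "(int \<Rightarrow> 'a \<Rightarrow> 'a) \<Rightarrow> ('a \<times> 'a \<Rightarrow> 'c) \<Rightarrow> bool" where
  "edge_coloring a c \<longleftrightarrow>
     (\<forall>x y. G_adj a x y \<longrightarrow> c (x, y) = c (y, x)) \<and>
     (\<forall>x y z. G_adj a x y \<and> G_adj a x z \<and> y \<noteq> z \<longrightarrow> c (x, y) \<noteq> c (x, z))"

end

theory Submission
  imports Defs
begin

text \<open>
  Colour each edge \<open>{x, a 1 x}\<close> by a colour attached to its left endpoint \<open>x\<close>; an edge
  colouring then amounts to a vertex colouring \<open>col\<close> with \<open>col (a 1 x) \<noteq> col x\<close>.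
  Let \<open>W\<close> be the set of left endpoints of edges inside \<open>V\<close>. A greedy construction along a
  Borel proper colouring with countably many colours yields a Borel maximal independent
  subset \<open>M\<close> of \<open>W\<close>. Points of \<open>M\<close> get colour 3, every other point gets 1 or 2 according to
  the parity of its distance to the nearest point of \<open>M\<close> behind it. That distance is finite
  because the backward ray from any point contains infinitely many edges inside \<open>V\<close>, whose
  left endpoints lie in \<open>W\<close> and hence in \<open>M\<close> or next to a point of \<open>M\<close>; and independence of
  \<open>M\<close> keeps colour 3 off adjacent edges.
\<close>

definition map_graph :: "('a \<Rightarrow> 'a) set \<Rightarrow> 'a \<Rightarrow> 'a \<Rightarrow> bool" where
  "map_graph F x y \<longleftrightarrow> (\<exists>f\<in>F. y = f x)"

lemma borel_coloring_map_graph: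
  fixes F :: "('a::{second_countable_topology, t1_space} \<Rightarrow> 'a) set"
  assumes "finite F"
    and measurable: "\<And>f. f \<in> F \<Longrightarrow> f \<in> borel_measurable borel"
    and no_fixpoint: "\<And>f x. f \<in> F \<Longrightarrow> f x \<noteq> x"
  shows "\<exists>c :: 'a \<Rightarrow> nat. c \<in> borel \<rightarrow>\<^sub>M count_space UNIV \<and>
           (\<forall>x y. map_graph F x y \<longrightarrow> c x \<noteq> c y)"
proof -
  obtain B :: "'a set set" where "countable B" and basis: "topological_basis B"
    using ex_countable_basis by blast
  have "B \<noteq> {}"
    using topological_basisE[OF basis open_UNIV] by blast
  define U where "U = from_nat_into B"
  have U_open: "open (U n)" for n
    unfolding U_def using from_nat_into[OF \<open>B \<noteq> {}\<close>] topological_basis_open[OF basis] by blast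
  have separating: "\<exists>n. x \<in> U n \<and> (\<forall>f\<in>F. f x \<notin> U n)" for x
  proof -
    have "open (- (\<lambda>f. f x) ` F)" and "x \<in> - (\<lambda>f. f x) ` F"
      using \<open>finite F\<close> no_fixpoint by (auto intro: finite_imp_closed) metis
    then obtain N where "N \<in> B" "x \<in> N" "N \<subseteq> - (\<lambda>f. f x) ` F"
      using topological_basisE[OF basis] by metis
    moreover obtain n where "N = U n"
      using \<open>N \<in> B\<close> range_from_nat_into[OF \<open>B \<noteq> {}\<close> \<open>countable B\<close>] unfolding U_def by blast
    ultimately show ?thesis by blast
  qed
  define c where "c x = (LEAST n. x \<in> U n \<and> (\<forall>f\<in>F. f x \<notin> U n))" for x
  have c_separates: "x \<in> U (c x) \<and> (\<forall>f\<in>F. f x \<notin> U (c x))" for x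
    unfolding c_def by (rule LeastI_ex[OF separating])
  have "c \<in> borel \<rightarrow>\<^sub>M count_space UNIV"
  proof -
    have [measurable]: "U n \<in> sets borel" for n
      using U_open by auto
    have [measurable]: "Measurable.pred borel (\<lambda>x. f x \<notin> U n)" if "f \<in> F" for f n
      using measurable[OF that] by measurable
    show ?thesis
      unfolding c_def[abs_def] using \<open>finite F\<close> by measurable
  qed
  moreover have "c x \<noteq> c y" if "map_graph F x y" for x y
    using that c_separates[of x] c_separates[of y] unfolding map_graph_def by metis
  ultimately show ?thesis by blast
qed

fun greedy_stage :: "('a \<Rightarrow> 'a \<Rightarrow> bool) \<Rightarrow> ('a \<Rightarrow> nat) \<Rightarrow> 'a set \<Rightarrow> nat \<Rightarrow> 'a set" where
  "greedy_stage E c W 0 = {x \<in> W. c x = 0}"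
| "greedy_stage E c W (Suc n) = greedy_stage E c W n \<union>
     {x \<in> W. c x = Suc n \<and> (\<forall>y. E x y \<longrightarrow> y \<notin> greedy_stage E c W n)}"

definition greedy_independent_set :: "('a \<Rightarrow> 'a \<Rightarrow> bool) \<Rightarrow> ('a \<Rightarrow> nat) \<Rightarrow> 'a set \<Rightarrow> 'a set" where
  "greedy_independent_set E c W = (\<Union>n. greedy_stage E c W n)"

lemma greedy_stage_subset: "greedy_stage E c W n \<subseteq> W"
  by (induction n) auto

lemma greedy_stage_mono: "m \<le> n \<Longrightarrow> greedy_stage E c W m \<subseteq> greedy_stage E c W n"
  by (induction n) (auto simp: le_Suc_eq)

lemma greedy_stage_colour_le: "x \<in> greedy_stage E c W n \<Longrightarrow> c x \<le> n"
  by (induction n) auto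

lemma greedy_stage_at_colour: "x \<in> greedy_stage E c W n \<Longrightarrow> x \<in> greedy_stage E c W (c x)"
  by (induction n) auto

lemma greedy_independent_set_iff_stage_at_colour:
  "x \<in> greedy_independent_set E c W \<longleftrightarrow> x \<in> greedy_stage E c W (c x)"
  unfolding greedy_independent_set_def using greedy_stage_at_colour[of x E c W] by auto

lemma greedy_independent_set_subset: "greedy_independent_set E c W \<subseteq> W"
  unfolding greedy_independent_set_def by (intro UN_least greedy_stage_subset)

lemma greedy_independent_set_independent:
  assumes sym: "\<And>x y. E x y \<Longrightarrow> E y x" and proper: "\<And>x y. E x y \<Longrightarrow> c x \<noteq> c y"
    and "x \<in> greedy_independent_set E c W" "y \<in> greedy_independent_set E c W"
  shows "\<not> E x y"
proof
  have earlier_not_adjacent: "\<not> E v u"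
    if "u \<in> greedy_independent_set E c W" "v \<in> greedy_independent_set E c W" "c u < c v"
    for u v
  proof -
    obtain m where m: "c v = Suc m" "c u \<le> m"
      using \<open>c u < c v\<close> by (cases "c v") auto
    have "u \<in> greedy_stage E c W (c u)"
      using that(1) by (simp only: greedy_independent_set_iff_stage_at_colour)
    then have u: "u \<in> greedy_stage E c W m"
      using greedy_stage_mono[OF m(2), of E c W] by blast
    have "v \<in> greedy_stage E c W (Suc m)"
      using that(2) m(1) by (simp only: greedy_independent_set_iff_stage_at_colour)
    moreover have "v \<notin> greedy_stage E c W m"
      using greedy_stage_colour_le[of v E c W m] m(1) by linarith
    ultimately have "\<forall>y. E v y \<longrightarrow> y \<notin> greedy_stage E c W m"
      by simp
    then show ?thesis
      using u by blast
  qed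
  assume "E x y"
  then have "c x \<noteq> c y"
    by (rule proper)
  then show False
    using earlier_not_adjacent[of x y] earlier_not_adjacent[of y x] \<open>E x y\<close> sym[OF \<open>E x y\<close>]
      assms(3,4) by (cases "c x < c y") auto
qed

lemma greedy_independent_set_dominating:
  assumes "w \<in> W" "w \<notin> greedy_independent_set E c W"
  shows "\<exists>y. E w y \<and> y \<in> greedy_independent_set E c W"
proof (cases "c w")
  case 0
  then have "w \<in> greedy_stage E c W 0"
    using assms(1) by simp
  then show ?thesis
    using assms(2) unfolding greedy_independent_set_def by blast
next
  case (Suc m)
  then have "w \<notin> greedy_stage E c W (Suc m)"
    using assms(2) unfolding greedy_independent_set_def by blast
  then obtain y where "E w y" "y \<in> greedy_stage E c W m"
    using Suc assms(1) by auto
  then show ?thesis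
    unfolding greedy_independent_set_def by blast
qed

lemma greedy_independent_set_borel:
  fixes F :: "('a::topological_space \<Rightarrow> 'a) set"
  assumes "finite F" and measurable: "\<And>f. f \<in> F \<Longrightarrow> f \<in> borel_measurable borel"
    and [measurable]: "c \<in> borel \<rightarrow>\<^sub>M count_space UNIV" "W \<in> sets borel"
  shows "greedy_independent_set (map_graph F) c W \<in> sets borel"
proof -
  have "greedy_stage (map_graph F) c W n \<in> sets borel" for n
  proof (induction n)
    case 0
    have "greedy_stage (map_graph F) c W 0 = {x \<in> space borel. x \<in> W \<and> c x = 0}"
      by auto
    also have "\<dots> \<in> sets borel"
      by measurable
    finally show ?case .
  next
    case (Suc n)
    note [measurable] = Suc
    have [measurable]: "Measurable.pred borel (\<lambda>x. f x \<notin> greedy_stage (map_graph F) c W n)"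
      if "f \<in> F" for f
      using measurable[OF that] by measurable
    have "greedy_stage (map_graph F) c W (Suc n) = {x \<in> space borel.
        x \<in> greedy_stage (map_graph F) c W n \<or>
        (x \<in> W \<and> c x = Suc n \<and> (\<forall>f\<in>F. f x \<notin> greedy_stage (map_graph F) c W n))}"
      by (auto simp: map_graph_def)
    also have "\<dots> \<in> sets borel"
      using \<open>finite F\<close> by measurable
    finally show ?case .
  qed
  then show ?thesis
    unfolding greedy_independent_set_def by blast
qed

locale Z_action =
  fixes a :: "int \<Rightarrow> 'a \<Rightarrow> 'a"
  assumes act_zero [simp]: "a 0 x = x"
    and act_add [simp]: "a m (a n x) = a (m + n) x"

lemma borel_Z_action_imp_Z_action: "borel_Z_action a \<Longrightarrow> Z_action a"
  unfolding borel_Z_action_def by unfold_locales (simp_all add: fun_eq_iff)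

locale free_Z_action = Z_action +
  assumes free: "a n x = x \<Longrightarrow> n = 0"

lemma free_action_imp_free_Z_action:
  "borel_Z_action a \<Longrightarrow> free_action a \<Longrightarrow> free_Z_action a"
  unfolding free_action_def
  by (intro free_Z_action.intro free_Z_action_axioms.intro borel_Z_action_imp_Z_action) auto

text \<open>The \<open>LEAST\<close> is unspecified when no point of \<open>M\<close> lies behind \<open>x\<close>; the lemmas below
  assume that one does.\<close>

definition back_distance :: "(int \<Rightarrow> 'a \<Rightarrow> 'a) \<Rightarrow> 'a set \<Rightarrow> 'a \<Rightarrow> nat" where
  "back_distance a M x = (LEAST k. 1 \<le> k \<and> a (- int k) x \<in> M)"

definition line_coloring :: "(int \<Rightarrow> 'a \<Rightarrow> 'a) \<Rightarrow> 'a set \<Rightarrow> 'a \<Rightarrow> nat" where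
  "line_coloring a M x = (if x \<in> M then 3 else if odd (back_distance a M x) then 1 else 2)"

definition edge_color :: "(int \<Rightarrow> 'a \<Rightarrow> 'a) \<Rightarrow> ('a \<Rightarrow> 'c) \<Rightarrow> 'a \<times> 'a \<Rightarrow> 'c" where
  "edge_color a col p = (if snd p = a 1 (fst p) then col (fst p) else col (snd p))"

lemma back_distance_measurable [measurable]:
  fixes a :: "int \<Rightarrow> 'a::topological_space \<Rightarrow> 'a"
  assumes [measurable]: "\<And>n. a n \<in> borel_measurable borel" "M \<in> sets borel"
  shows "back_distance a M \<in> borel \<rightarrow>\<^sub>M count_space UNIV"
  unfolding back_distance_def[abs_def] by measurable

lemma line_coloring_measurable [measurable]:
  fixes a :: "int \<Rightarrow> 'a::topological_space \<Rightarrow> 'a"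
  assumes [measurable]: "\<And>n. a n \<in> borel_measurable borel" "M \<in> sets borel"
  shows "line_coloring a M \<in> borel \<rightarrow>\<^sub>M count_space UNIV"
  unfolding line_coloring_def[abs_def] by measurable

lemma line_coloring_values: "line_coloring a M x \<in> {1, 2, 3}"
  unfolding line_coloring_def by simp

lemma line_coloring_eq_3_iff: "line_coloring a M x = 3 \<longleftrightarrow> x \<in> M"
  unfolding line_coloring_def by simp

lemma edge_color_measurable:
  fixes a :: "int \<Rightarrow> 'a::{second_countable_topology, t2_space} \<Rightarrow> 'a"
  assumes [measurable]: "a 1 \<in> borel_measurable borel" "col \<in> borel \<rightarrow>\<^sub>M count_space UNIV"
  shows "edge_color a col \<in> borel \<rightarrow>\<^sub>M count_space UNIV"
proof -
  have [measurable]: "fst \<in> borel_measurable (borel :: ('a \<times> 'a) measure)"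
    "snd \<in> borel_measurable (borel :: ('a \<times> 'a) measure)"
    by (intro borel_measurable_continuous_onI continuous_intros)+
  show ?thesis
    unfolding edge_color_def[abs_def] by measurable
qed

context Z_action
begin

lemma G_adj_iff: "G_adj a x y \<longleftrightarrow> y = a 1 x \<or> x = a 1 y"
  unfolding G_adj_def by auto

lemma G_adj_sym: "G_adj a x y \<Longrightarrow> G_adj a y x"
  unfolding G_adj_iff by blast

lemma G_adj_eq_map_graph: "G_adj a = map_graph {a 1, a (-1)}"
  by (intro ext) (simp add: G_adj_def map_graph_def)

lemma back_distance_succ:
  assumes "x \<notin> M" and "\<exists>k\<ge>1. a (- int k) x \<in> M"
  shows "back_distance a M (a 1 x) = Suc (back_distance a M x)"
proof -
  define P where "P y k \<longleftrightarrow> 1 \<le> k \<and> a (- int k) y \<in> M" for y k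
  have shift: "P (a 1 x) (Suc k) \<longleftrightarrow> P x k" for k
    using \<open>x \<notin> M\<close> by (cases k) (auto simp: P_def algebra_simps)
  obtain k where "P x k"
    using assms(2) unfolding P_def by blast
  have "P (a 1 x) (Suc k)"
    using shift \<open>P x k\<close> by blast
  moreover have "\<not> P (a 1 x) 0"
    by (simp add: P_def)
  ultimately have "(LEAST k. P (a 1 x) k) = Suc (LEAST k. P (a 1 x) (Suc k))"
    by (rule Least_Suc)
  then have "back_distance a M (a 1 x) = Suc (LEAST k. P (a 1 x) (Suc k))"
    unfolding back_distance_def P_def .
  also have "\<dots> = Suc (back_distance a M x)"
    unfolding shift unfolding back_distance_def P_def ..
  finally show ?thesis .
qed

lemma line_coloring_proper:
  assumes independent: "\<And>x. x \<in> M \<Longrightarrow> a 1 x \<notin> M"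
    and meets_behind: "\<And>x. \<exists>k\<ge>1. a (- int k) x \<in> M"
  shows "line_coloring a M (a 1 x) \<noteq> line_coloring a M x"
proof (cases "x \<in> M \<or> a 1 x \<in> M")
  case True
  then show ?thesis
    using independent[of x] unfolding line_coloring_def by auto
next
  case False
  then show ?thesis
    using back_distance_succ[OF _ meets_behind] unfolding line_coloring_def by auto
qed

lemma edge_color_succ [simp]: "edge_color a col (x, a 1 x) = col x"
  unfolding edge_color_def by simp

end

context free_Z_action
begin

lemma act_inj: "a m x = a n x \<Longrightarrow> m = n"
  using free[of "m - n" "a n x"] by simp

lemma edge_color_pred [simp]: "edge_color a col (a 1 x, x) = col x"
proof -
  have "x \<noteq> a 1 (a 1 x)"
    using act_inj[of 0 x 2] by auto
  then show ?thesis
    unfolding edge_color_def by simp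
qed

lemma edge_color_G_adj:
  "G_adj a x y \<Longrightarrow> \<exists>z. {x, y} = {z, a 1 z} \<and> edge_color a col (x, y) = col z"
  unfolding G_adj_iff by auto

lemma edge_coloring_edge_color:
  assumes proper: "\<And>x. col (a 1 x) \<noteq> col x"
  shows "edge_coloring a (edge_color a col)"
  unfolding edge_coloring_def
proof (intro conjI allI impI)
  fix x y
  assume "G_adj a x y"
  then show "edge_color a col (x, y) = edge_color a col (y, x)"
    unfolding G_adj_iff by auto
next
  fix x y z
  assume "G_adj a x y \<and> G_adj a x z \<and> y \<noteq> z"
  then have "{y, z} = {a 1 x, a (-1) x}"
    unfolding G_adj_def by auto
  moreover have "edge_color a col (x, a (-1) x) = col (a (-1) x)"
    using edge_color_pred[of col "a (-1) x"] by simp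
  ultimately show "edge_color a col (x, y) \<noteq> edge_color a col (x, z)"
    using proper[of "a (-1) x"] by (auto simp: doubleton_eq_iff)
qed

lemma backward_ray: "injective_ray a (\<lambda>i. a (- int i) x)"
  unfolding injective_ray_def G_adj_def
  by (auto intro!: injI dest: act_inj simp: algebra_simps)

lemma backward_orbit_meets:
  assumes rays: "\<And>r. injective_ray a r \<Longrightarrow> infinite {i. r i \<in> V \<and> r (Suc i) \<in> V}"
    and dominating: "\<And>w. w \<in> V \<Longrightarrow> a 1 w \<in> V \<Longrightarrow> w \<notin> M \<Longrightarrow> \<exists>y. G_adj a w y \<and> y \<in> M"
  shows "\<exists>k\<ge>1. a (- int k) x \<in> M"
proof -
  obtain i where "i \<ge> 1" "a (- int i) x \<in> V" "a (- int (Suc i)) x \<in> V"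
    using rays[OF backward_ray] unfolding infinite_nat_iff_unbounded_le by blast
  define w where "w = a (- int (Suc i)) x"
  have w_succ: "a 1 w = a (- int i) x"
    unfolding w_def by simp
  have w_pred: "a (-1) w = a (- int (Suc (Suc i))) x"
    unfolding w_def act_add by (rule arg_cong[where f = "\<lambda>k. a k x"]) simp
  have "w \<in> M \<or> a 1 w \<in> M \<or> a (-1) w \<in> M"
    using dominating[of w] \<open>a (- int i) x \<in> V\<close> \<open>a (- int (Suc i)) x \<in> V\<close>
    unfolding w_succ w_def[symmetric] G_adj_def by blast
  then show ?thesis
    unfolding w_succ w_pred using \<open>i \<ge> 1\<close> w_def by (meson le_SucI)
qed

end

lemma borel_marker_set:
  fixes a :: "int \<Rightarrow> 'a::{second_countable_topology, t1_space} \<Rightarrow> 'a"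
  assumes "borel_Z_action a" and "free_action a" and [measurable]: "V \<in> sets borel"
    and rays: "\<And>r. injective_ray a r \<Longrightarrow> infinite {i. r i \<in> V \<and> r (Suc i) \<in> V}"
  obtains M where "M \<in> sets borel" and "M \<subseteq> {x \<in> V. a 1 x \<in> V}"
    and "\<forall>x\<in>M. a 1 x \<notin> M" and "\<forall>x. \<exists>k\<ge>1. a (- int k) x \<in> M"
proof -
  interpret free_Z_action a
    using assms(1,2) by (rule free_action_imp_free_Z_action)
  have [measurable]: "a n \<in> borel_measurable borel" for n
    using assms(1) unfolding borel_Z_action_def by blast
  obtain c :: "'a \<Rightarrow> nat" where [measurable]: "c \<in> borel \<rightarrow>\<^sub>M count_space UNIV"
    and c_proper: "\<And>x y. G_adj a x y \<Longrightarrow> c x \<noteq> c y"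
    using borel_coloring_map_graph[of "{a 1, a (-1)}"] act_inj[of _ _ 0]
    unfolding G_adj_eq_map_graph by force
  define W where "W = {x \<in> V. a 1 x \<in> V}"
  define M where "M = greedy_independent_set (G_adj a) c W"
  have "W \<in> sets borel"
    unfolding W_def by measurable
  then have "M \<in> sets borel"
    unfolding M_def G_adj_eq_map_graph by (intro greedy_independent_set_borel) auto
  moreover have "M \<subseteq> W"
    unfolding M_def by (rule greedy_independent_set_subset)
  moreover have "a 1 x \<notin> M" if "x \<in> M" for x
  proof
    assume "a 1 x \<in> M"
    then have "\<not> G_adj a x (a 1 x)"
      using greedy_independent_set_independent[where E = "G_adj a" and c = c, OF G_adj_sym c_proper]
        \<open>x \<in> M\<close> unfolding M_def by blast
    then show False
      unfolding G_adj_def by simp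
  qed
  moreover have "\<exists>k\<ge>1. a (- int k) x \<in> M" for x
  proof (rule backward_orbit_meets[OF rays])
    fix w
    assume "w \<in> V" "a 1 w \<in> V" "w \<notin> M"
    then show "\<exists>y. G_adj a w y \<and> y \<in> M"
      unfolding M_def by (intro greedy_independent_set_dominating) (simp_all add: W_def)
  qed
  ultimately show ?thesis
    using that unfolding W_def by blast
qed

lemma borel_edge_coloring_from_markers:
  fixes a :: "int \<Rightarrow> 'a::{second_countable_topology, t2_space} \<Rightarrow> 'a"
  assumes "borel_Z_action a" and "free_action a" and M_borel: "M \<in> sets borel"
    and independent: "\<forall>x\<in>M. a 1 x \<notin> M"
    and meets_behind: "\<forall>x. \<exists>k\<ge>1. a (- int k) x \<in> M"
  shows "edge_color a (line_coloring a M) \<in> borel \<rightarrow>\<^sub>M count_space UNIV"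
    and "edge_coloring a (edge_color a (line_coloring a M))"
    and "G_adj a x y \<Longrightarrow> edge_color a (line_coloring a M) (x, y) \<in> {1, 2, 3}"
    and "G_adj a x y \<Longrightarrow> edge_color a (line_coloring a M) (x, y) = 3 \<Longrightarrow>
           \<exists>z\<in>M. {x, y} = {z, a 1 z}"
proof -
  interpret free_Z_action a
    using assms(1,2) by (rule free_action_imp_free_Z_action)
  have [measurable]: "a n \<in> borel_measurable borel" for n
    using assms(1) unfolding borel_Z_action_def by blast
  show "edge_color a (line_coloring a M) \<in> borel \<rightarrow>\<^sub>M count_space UNIV"
    using M_borel by (intro edge_color_measurable line_coloring_measurable) auto
  show "edge_coloring a (edge_color a (line_coloring a M))"
    using independent meets_behind by (intro edge_coloring_edge_color line_coloring_proper) auto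
  show "edge_color a (line_coloring a M) (x, y) \<in> {1, 2, 3}" if "G_adj a x y"
    using edge_color_G_adj[OF that] line_coloring_values by metis
  show "\<exists>z\<in>M. {x, y} = {z, a 1 z}"
    if "G_adj a x y" and "edge_color a (line_coloring a M) (x, y) = 3"
    using edge_color_G_adj[OF that(1)] that(2) line_coloring_eq_3_iff by metis
qed

theorem lemma2:
  fixes a :: "int \<Rightarrow> 'a::polish_space \<Rightarrow> 'a" and V :: "'a set"
  assumes "borel_Z_action a" and "free_action a"
    and "V \<in> sets borel"
    and "\<And>r. injective_ray a r \<Longrightarrow> infinite {i. r i \<in> V \<and> r (Suc i) \<in> V}"
  shows "\<exists>c :: 'a \<times> 'a \<Rightarrow> nat.
           c \<in> measurable borel (count_space UNIV) \<and>
           edge_coloring a c \<and>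
           (\<forall>x y. G_adj a x y \<longrightarrow> c (x, y) \<in> {1, 2, 3}) \<and>
           (\<forall>x y. G_adj a x y \<and> c (x, y) = 3 \<longrightarrow> x \<in> V \<and> y \<in> V)"
proof -
  obtain M where M_borel: "M \<in> sets borel" and M_inside: "M \<subseteq> {x \<in> V. a 1 x \<in> V}"
    and M_independent: "\<forall>x\<in>M. a 1 x \<notin> M"
    and M_meets_behind: "\<forall>x. \<exists>k\<ge>1. a (- int k) x \<in> M"
    using borel_marker_set[OF assms] by blast
  note coloring = borel_edge_coloring_from_markers[OF assms(1,2) M_borel M_independent M_meets_behind]
  have "x \<in> V \<and> y \<in> V"
    if adjacent: "G_adj a x y" and colour_3: "edge_color a (line_coloring a M) (x, y) = 3" for x y
  proof -
    obtain z where "z \<in> M" and "{x, y} = {z, a 1 z}"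
      using coloring(4)[OF adjacent colour_3] by blast
    then show ?thesis
      using M_inside by (auto simp: doubleton_eq_iff)
  qed
  then show ?thesis
    using coloring(1-3) by blast
qed

end
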